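(* If $\Delta$ and $\Theta$ are deterministic, then $p\cdot\Delta + (1-p)\cdot\Theta$ is deterministic for every probability $p$.
   Context: Distributions are over lqCCS extended configurations $\langle\!\langle \rho, P, R \rangle\!\rangle$ (density operator, process, observer) and a deadlock configuration $\bot$. Contexts $O[\cdot] = [\cdot] \parallel R'$ add an observer $R'$ (a process without $\tau$ and restriction whose sums are only sums of inputs on distinct channels). $\rightsquigarrow_\pi$ is the enhanced semantics with index $\pi = \diamond$ (only the process moves) or $\pi \in \{\ell,r\}^*$ (naming the observer component that acts), lifted to distributions by linearity so that all configurations in the support move with the same index; it is decomposable with respect to convex combinations. Constrained saturated bisimilarity $\sim_{cs}$ is the largest relation that, for every context, preserves barbs and matches indexed moves with related results, and it is linear (closed under convex combinations). A set $\mathcal{A}$ of distributions is deterministic if for every $\Delta \in \mathcal{A}$, every context $O[\cdot]$ and index $\pi$, whenever $O[\Delta] \rightsquigarrow_\pi \Delta'$ and $O[\Delta] \rightsquigarrow_\pi \Delta''$ then $\Delta' \sim_{cs} \Delta''$ and $\Delta', \Delta'' \in \mathcal{A}$; a distribution is deterministic if it belongs to some deterministic set. *)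

theory Defs
  imports "HOL-Probability.Probability"
begin

text \<open>Abstract rendering of the lqCCS setting.
  'c : extended configurations (density operator, process, observer) together with the
       deadlock configuration; distributions are 'c pmf.
  'o : observers R' (the admissible contexts O[.] = [.] || R').
  plug Rc c : the configuration O[c]; O[Delta] is obtained by pushing Delta through plug Rc.
  cstep c ix Theta : configuration c moves with index ix to the distribution Theta
       (enhanced semantics).
  barb Delta b : distribution Delta exhibits barb b.\<close>

datatype side = SL | SR
datatype idx = Proc | Obs "side list"

definition cmix :: "real \<Rightarrow> 'c pmf \<Rightarrow> 'c pmf \<Rightarrow> 'c pmf" where
  "cmix p D T = bind_pmf (bernoulli_pmf p) (\<lambda>b. if b then D else T)"

definition ctx :: "('o \<Rightarrow> 'c \<Rightarrow> 'c) \<Rightarrow> 'o \<Rightarrow> 'c pmf \<Rightarrow> 'c pmf" where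
  "ctx plug Rc D = map_pmf (plug Rc) D"

text \<open>Lifting of the configuration semantics to distributions by linearity: every
  configuration in the support moves with the same index.\<close>
definition dstep :: "('c \<Rightarrow> idx \<Rightarrow> 'c pmf \<Rightarrow> bool) \<Rightarrow> 'c pmf \<Rightarrow> idx \<Rightarrow> 'c pmf \<Rightarrow> bool" where
  "dstep cstep D ix D' \<longleftrightarrow>
     (\<exists>J :: ('c \<times> 'c pmf) pmf. map_pmf fst J = D \<and>
        (\<forall>x \<in> set_pmf J. cstep (fst x) ix (snd x)) \<and> D' = bind_pmf J snd)"

definition cs_bisim ::
  "('o \<Rightarrow> 'c \<Rightarrow> 'c) \<Rightarrow> ('c \<Rightarrow> idx \<Rightarrow> 'c pmf \<Rightarrow> bool) \<Rightarrow> ('c pmf \<Rightarrow> 'b \<Rightarrow> bool)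
    \<Rightarrow> ('c pmf \<Rightarrow> 'c pmf \<Rightarrow> bool) \<Rightarrow> bool" where
  "cs_bisim plug cstep barb R \<longleftrightarrow>
     (\<forall>D T. R D T \<longrightarrow> R T D) \<and>
     (\<forall>D T. R D T \<longrightarrow> (\<forall>Rc.
        (\<forall>b. barb (ctx plug Rc D) b \<longleftrightarrow> barb (ctx plug Rc T) b) \<and>
        (\<forall>ix D'. dstep cstep (ctx plug Rc D) ix D' \<longrightarrow>
           (\<exists>T'. dstep cstep (ctx plug Rc T) ix T' \<and> R D' T'))))"

definition cs_bisimilar ::
  "('o \<Rightarrow> 'c \<Rightarrow> 'c) \<Rightarrow> ('c \<Rightarrow> idx \<Rightarrow> 'c pmf \<Rightarrow> bool) \<Rightarrow> ('c pmf \<Rightarrow> 'b \<Rightarrow> bool)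
    \<Rightarrow> 'c pmf \<Rightarrow> 'c pmf \<Rightarrow> bool" where
  "cs_bisimilar plug cstep barb D T \<longleftrightarrow> (\<exists>R. cs_bisim plug cstep barb R \<and> R D T)"

text \<open>Standing fact of the paper: constrained saturated bisimilarity is linear.\<close>
definition cs_linear ::
  "('o \<Rightarrow> 'c \<Rightarrow> 'c) \<Rightarrow> ('c \<Rightarrow> idx \<Rightarrow> 'c pmf \<Rightarrow> bool) \<Rightarrow> ('c pmf \<Rightarrow> 'b \<Rightarrow> bool) \<Rightarrow> bool" where
  "cs_linear plug cstep barb \<longleftrightarrow>
     (\<forall>p D1 D2 T1 T2. 0 \<le> p \<and> p \<le> 1 \<and> cs_bisimilar plug cstep barb D1 T1 \<and>
        cs_bisimilar plug cstep barb D2 T2 \<longrightarrow>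
        cs_bisimilar plug cstep barb (cmix p D1 D2) (cmix p T1 T2))"

definition det_set ::
  "('o \<Rightarrow> 'c \<Rightarrow> 'c) \<Rightarrow> ('c \<Rightarrow> idx \<Rightarrow> 'c pmf \<Rightarrow> bool) \<Rightarrow> ('c pmf \<Rightarrow> 'b \<Rightarrow> bool)
    \<Rightarrow> 'c pmf set \<Rightarrow> bool" where
  "det_set plug cstep barb A \<longleftrightarrow>
     (\<forall>D \<in> A. \<forall>Rc ix D' D''. dstep cstep (ctx plug Rc D) ix D' \<and> dstep cstep (ctx plug Rc D) ix D''
        \<longrightarrow> cs_bisimilar plug cstep barb D' D'' \<and> D' \<in> A \<and> D'' \<in> A)"

definition deterministic ::
  "('o \<Rightarrow> 'c \<Rightarrow> 'c) \<Rightarrow> ('c \<Rightarrow> idx \<Rightarrow> 'c pmf \<Rightarrow> bool) \<Rightarrow> ('c pmf \<Rightarrow> 'b \<Rightarrow> bool)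
    \<Rightarrow> 'c pmf \<Rightarrow> bool" where
  "deterministic plug cstep barb D \<longleftrightarrow> (\<exists>A. det_set plug cstep barb A \<and> D \<in> A)"

end

theory Submission
  imports Defs
begin

text \<open>If \<open>A\<close> and \<open>B\<close> are deterministic sets, so is \<open>A \<union> B\<close> together with all strict
  mixtures \<open>cmix q X Y\<close> (\<open>0 < q < 1\<close>, \<open>X \<in> A\<close>, \<open>Y \<in> B\<close>). Indeed, conditioning the joint
  distribution that witnesses a step of such a mixture on the fibres of the source
  configuration splits the step into a step of \<open>X\<close> and a step of \<open>Y\<close> with the same index.
  Two steps of the mixture thus give mixtures of pairwise bisimilar results, which are
  bisimilar by linearity and are again strict mixtures of elements of \<open>A\<close> and \<open>B\<close>.\<close>

lemma pmf_cmix: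
  assumes "0 \<le> q" "q \<le> 1"
  shows "pmf (cmix q A B) z = q * pmf A z + (1 - q) * pmf B z"
  using assms by (simp add: cmix_def pmf_bind)

lemma cmix_0 [simp]: "cmix 0 A B = B"
  by (rule pmf_eqI) (simp add: pmf_cmix)

lemma cmix_1 [simp]: "cmix 1 A B = A"
  by (rule pmf_eqI) (simp add: pmf_cmix)

lemma set_pmf_cmix:
  assumes "0 < q" "q < 1"
  shows "set_pmf (cmix q A B) = set_pmf A \<union> set_pmf B"
  using assms by (auto simp: cmix_def split: if_splits)

lemma map_pmf_cmix: "map_pmf f (cmix q A B) = cmix q (map_pmf f A) (map_pmf f B)"
  unfolding cmix_def map_bind_pmf
  by (rule arg_cong[where f="bind_pmf _"]) (simp add: fun_eq_iff)

lemma bind_pmf_cmix: "bind_pmf (cmix q A B) g = cmix q (bind_pmf A g) (bind_pmf B g)"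
  unfolding cmix_def bind_assoc_pmf
  by (rule arg_cong[where f="bind_pmf _"]) (simp add: fun_eq_iff)

definition lift_along :: "('a \<Rightarrow> 'b) \<Rightarrow> 'a pmf \<Rightarrow> 'b pmf \<Rightarrow> 'a pmf" where
  "lift_along f J X = bind_pmf X (\<lambda>x. cond_pmf J (f -` {x}))"

lemma
  assumes "set_pmf X \<subseteq> set_pmf (map_pmf f J)"
  shows map_pmf_lift_along: "map_pmf f (lift_along f J X) = X"
    and pmf_lift_along: "pmf (lift_along f J X) z = pmf X (f z) * pmf J z / pmf (map_pmf f J) (f z)"
proof -
  have fibre: "set_pmf J \<inter> f -` {x} \<noteq> {}" if "x \<in> set_pmf X" for x
    using assms that by auto
  have "map_pmf f (cond_pmf J (f -` {x})) = return_pmf x" if "x \<in> set_pmf X" for x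
    using fibre[OF that] by (auto simp: map_pmf_eq_return_pmf_iff)
  then show "map_pmf f (lift_along f J X) = X"
    unfolding lift_along_def map_bind_pmf
    by (subst bind_pmf_cong[OF refl, where g=return_pmf]) (auto simp: bind_return_pmf')
  have pmf_fibre: "pmf (cond_pmf J (f -` {x})) z =
      (if f z = x then pmf J z / pmf (map_pmf f J) x else 0)" if "x \<in> set_pmf X" for x
    using fibre[OF that] by (simp add: pmf_cond pmf_map)
  have "pmf (lift_along f J X) z = (\<Sum>x\<in>{f z}. pmf (cond_pmf J (f -` {x})) z * pmf X x)"
    unfolding lift_along_def pmf_bind
    by (rule integral_measure_pmf_real) (auto simp: pmf_fibre split: if_splits)
  also have "\<dots> = pmf X (f z) * pmf J z / pmf (map_pmf f J) (f z)"
    by (cases "f z \<in> set_pmf X") (auto simp: pmf_fibre set_pmf_iff)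
  finally show "pmf (lift_along f J X) z = pmf X (f z) * pmf J z / pmf (map_pmf f J) (f z)" .
qed

lemma cmix_lift_along:
  assumes q: "0 < q" "q < 1" and J: "map_pmf f J = cmix q X Y"
  shows "J = cmix q (lift_along f J X) (lift_along f J Y)"
proof (rule pmf_eqI)
  fix z
  have sub: "set_pmf X \<subseteq> set_pmf (map_pmf f J)" "set_pmf Y \<subseteq> set_pmf (map_pmf f J)"
    using q by (auto simp: J set_pmf_cmix)
  show "pmf J z = pmf (cmix q (lift_along f J X) (lift_along f J Y)) z"
  proof (cases "pmf (map_pmf f J) (f z) = 0")
    case True
    then have "pmf J z = 0"
      by (metis imageI pmf_eq_0_set_pmf set_map_pmf)
    with q True show ?thesis
      by (simp add: pmf_cmix pmf_lift_along[OF sub(1)] pmf_lift_along[OF sub(2)])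
  next
    case False
    have "pmf (cmix q (lift_along f J X) (lift_along f J Y)) z =
        pmf (cmix q X Y) (f z) * pmf J z / pmf (map_pmf f J) (f z)"
      using q by (simp add: pmf_cmix pmf_lift_along[OF sub(1)] pmf_lift_along[OF sub(2)]
          add_divide_distrib[symmetric] algebra_simps)
    also have "\<dots> = pmf J z"
      using False by (simp add: J)
    finally show ?thesis by simp
  qed
qed

lemma dstep_cmix_split:
  assumes q: "0 < q" "q < 1" and step: "dstep cstep (cmix q X Y) ix E"
  obtains X' Y' where "dstep cstep X ix X'" "dstep cstep Y ix Y'" "E = cmix q X' Y'"
proof -
  obtain J where J: "map_pmf fst J = cmix q X Y" and moves: "\<forall>x \<in> set_pmf J. cstep (fst x) ix (snd x)"
    and E: "E = bind_pmf J snd"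
    using step unfolding dstep_def by blast
  define JX where "JX = lift_along fst J X"
  define JY where "JY = lift_along fst J Y"
  have split: "J = cmix q JX JY"
    unfolding JX_def JY_def using cmix_lift_along[OF q J] .
  have "set_pmf J = set_pmf JX \<union> set_pmf JY"
    using q split set_pmf_cmix by metis
  moreover have "map_pmf fst JX = X" "map_pmf fst JY = Y"
    unfolding JX_def JY_def using q by (simp_all add: map_pmf_lift_along J set_pmf_cmix)
  ultimately have "dstep cstep X ix (bind_pmf JX snd)" "dstep cstep Y ix (bind_pmf JY snd)"
    unfolding dstep_def using moves by auto
  moreover have "E = cmix q (bind_pmf JX snd) (bind_pmf JY snd)"
    using E split bind_pmf_cmix by metis
  ultimately show thesis using that by blast
qed

lemma det_set_Un:
  assumes "det_set plug cstep barb A" "det_set plug cstep barb B"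
  shows "det_set plug cstep barb (A \<union> B)"
  using assms unfolding det_set_def by blast

lemma det_set_strict_mixtures:
  assumes lin: "cs_linear plug cstep barb"
    and A: "det_set plug cstep barb A" and B: "det_set plug cstep barb B"
  shows "det_set plug cstep barb {cmix q X Y | q X Y. 0 < q \<and> q < 1 \<and> X \<in> A \<and> Y \<in> B}"
    (is "det_set plug cstep barb ?M")
  unfolding det_set_def
proof (intro ballI allI impI)
  fix M Rc ix D' D''
  assume "M \<in> ?M" and steps: "dstep cstep (ctx plug Rc M) ix D' \<and> dstep cstep (ctx plug Rc M) ix D''"
  then obtain q X Y where q: "0 < q" "q < 1" and XY: "X \<in> A" "Y \<in> B" and M: "M = cmix q X Y"
    by blast
  have ctx_M: "ctx plug Rc M = cmix q (ctx plug Rc X) (ctx plug Rc Y)"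
    by (simp add: M ctx_def map_pmf_cmix)
  obtain X1 Y1 where 1: "dstep cstep (ctx plug Rc X) ix X1" "dstep cstep (ctx plug Rc Y) ix Y1"
      "D' = cmix q X1 Y1"
    using dstep_cmix_split[OF q] steps ctx_M by metis
  obtain X2 Y2 where 2: "dstep cstep (ctx plug Rc X) ix X2" "dstep cstep (ctx plug Rc Y) ix Y2"
      "D'' = cmix q X2 Y2"
    using dstep_cmix_split[OF q] steps ctx_M by metis
  have X12: "cs_bisimilar plug cstep barb X1 X2" "X1 \<in> A" "X2 \<in> A"
    using A XY(1) 1 2 unfolding det_set_def by blast+
  have Y12: "cs_bisimilar plug cstep barb Y1 Y2" "Y1 \<in> B" "Y2 \<in> B"
    using B XY(2) 1 2 unfolding det_set_def by blast+
  have "cs_bisimilar plug cstep barb D' D''"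
    using lin X12(1) Y12(1) q unfolding 1(3) 2(3) cs_linear_def by simp
  moreover have "D' \<in> ?M" "D'' \<in> ?M"
    using 1(3) 2(3) X12 Y12 q by blast+
  ultimately show "cs_bisimilar plug cstep barb D' D'' \<and> D' \<in> ?M \<and> D'' \<in> ?M"
    by blast
qed

theorem lemmaC8:
  fixes plug :: "'o \<Rightarrow> 'c \<Rightarrow> 'c"
    and cstep :: "'c \<Rightarrow> idx \<Rightarrow> 'c pmf \<Rightarrow> bool"
    and barb :: "'c pmf \<Rightarrow> 'b \<Rightarrow> bool"
    and D T :: "'c pmf" and p :: real
  assumes "cs_linear plug cstep barb"
    and "deterministic plug cstep barb D"
    and "deterministic plug cstep barb T"
    and "0 \<le> p" and "p \<le> 1"
  shows "deterministic plug cstep barb (cmix p D T)"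
proof -
  obtain A where A: "det_set plug cstep barb A" "D \<in> A"
    using assms(2) unfolding deterministic_def by blast
  obtain B where B: "det_set plug cstep barb B" "T \<in> B"
    using assms(3) unfolding deterministic_def by blast
  let ?M = "{cmix q X Y | q X Y. 0 < q \<and> q < 1 \<and> X \<in> A \<and> Y \<in> B}"
  have "det_set plug cstep barb (A \<union> B \<union> ?M)"
    using det_set_strict_mixtures[OF assms(1) A(1) B(1)] A(1) B(1) by (simp add: det_set_Un)
  moreover have "cmix p D T \<in> A \<union> B \<union> ?M"
  proof (cases "p = 0 \<or> p = 1")
    case True
    then show ?thesis using A(2) B(2) by auto
  next
    case False
    then have "0 < p" "p < 1" using assms(4,5) by auto
    then show ?thesis using A(2) B(2) by blast
  qed
  ultimately show ?thesis
    unfolding deterministic_def by blast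
qed

end
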